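(* Let $t\ge 2$ be an integer and let $0\le i<j<k\le t-2$ be integers. Let $p_i\in D_i$, $p_j\in D_j$, $p_k\in D_k$. Then $(p_i,p_j,p_k)$ is a right turn (i.e., the three points are in clockwise orientation).
   Context: Let $t\ge 2$ be an integer. For $0\le i\le t-3$ define the vector $v_i:=(3(t-i),-3i)$, and define points $w_0:=(0,0)$ and $w_{i+1}:=w_i+v_i$ for $i=0,\dots,t-3$. For $i=0,\dots,t-2$, let $C_i$ be the closed unit square whose lower left corner is $w_i$, and let $D_i:=\{((t+1)4^{t+1}x,\,(t+1)4^{t+1}y):(x,y)\in C_i\}$ be $C_i$ scaled by the factor $(t+1)4^{t+1}$. *)

theory Defs
  imports Complex_Main
begin

definition vstep :: "nat \<Rightarrow> nat \<Rightarrow> real \<times> real" where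
  "vstep t i = (3 * (real t - real i), - 3 * real i)"

fun wpt :: "nat \<Rightarrow> nat \<Rightarrow> real \<times> real" where
  "wpt t 0 = (0, 0)"
| "wpt t (Suc i) = (fst (wpt t i) + fst (vstep t i), snd (wpt t i) + snd (vstep t i))"

definition Csq :: "nat \<Rightarrow> nat \<Rightarrow> (real \<times> real) set" where
  "Csq t i = {(x, y). fst (wpt t i) \<le> x \<and> x \<le> fst (wpt t i) + 1 \<and>
                      snd (wpt t i) \<le> y \<and> y \<le> snd (wpt t i) + 1}"

definition scalefac :: "nat \<Rightarrow> real" where
  "scalefac t = (real t + 1) * 4 ^ (t + 1)"

definition Dsq :: "nat \<Rightarrow> nat \<Rightarrow> (real \<times> real) set" where
  "Dsq t i = {(scalefac t * x, scalefac t * y) | x y. (x, y) \<in> Csq t i}"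

definition right_turn :: "real \<times> real \<Rightarrow> real \<times> real \<Rightarrow> real \<times> real \<Rightarrow> bool" where
  "right_turn p q r \<longleftrightarrow>
     (fst q - fst p) * (snd r - snd p) - (snd q - snd p) * (fst r - fst p) < 0"

end

theory Submission
  imports Defs
begin

text \<open>The corners w_i lie on a concave chain going right and down, and the cross product of three
of them is cubic in the index gaps: -9t(j-i)(k-i)(k-j)/2. Moving each point inside its unit
square changes the cross product by at most the l1-span 3t(k-i) of the chain plus 3, which the
cubic term dominates; scaling all points by the same positive factor preserves orientation.\<close>

definition cross :: "real \<times> real \<Rightarrow> real \<times> real \<Rightarrow> real \<times> real \<Rightarrow> real" where
  "cross p q r = (fst q - fst p) * (snd r - snd p) - (snd q - snd p) * (fst r - fst p)"

definition unit_square :: "real \<times> real \<Rightarrow> (real \<times> real) set" where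
  "unit_square w = {(x, y). fst w \<le> x \<and> x \<le> fst w + 1 \<and> snd w \<le> y \<and> y \<le> snd w + 1}"

lemma right_turn_iff_cross: "right_turn p q r \<longleftrightarrow> cross p q r < 0"
  by (simp add: right_turn_def cross_def)

lemma right_turn_scale_iff:
  assumes "0 < (s::real)"
  shows "right_turn (s * x1, s * y1) (s * x2, s * y2) (s * x3, s * y3) \<longleftrightarrow>
         right_turn (x1, y1) (x2, y2) (x3, y3)"
proof -
  have "cross (s * x1, s * y1) (s * x2, s * y2) (s * x3, s * y3) =
        (s * s) * cross (x1, y1) (x2, y2) (x3, y3)"
    by (simp add: cross_def algebra_simps)
  then show ?thesis
    using assms by (simp add: right_turn_iff_cross mult_less_0_iff)
qed

lemma Csq_eq_unit_square: "Csq t i = unit_square (wpt t i)"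
  by (simp add: Csq_def unit_square_def)

lemma unit_cross_le_1:
  fixes a b c d :: real
  assumes "0 \<le> a" "a \<le> 1" "0 \<le> b" "0 \<le> c" "0 \<le> d" "d \<le> 1"
  shows "a * d - b * c \<le> 1"
proof -
  have "a * d \<le> 1 * 1" using assms by (intro mult_mono) auto
  moreover have "0 \<le> b * c" using assms by simp
  ultimately show ?thesis by simp
qed

lemma unit_weighted_sum_le_sum:
  fixes a b X Y :: real
  assumes "0 \<le> a" "a \<le> 1" "0 \<le> b" "b \<le> 1" "0 \<le> X" "0 \<le> Y"
  shows "a * X + b * Y \<le> X + Y"
  using assms mult_right_mono[of a 1 X] mult_right_mono[of b 1 Y] by simp

lemma cross_unit_squares_le:
  fixes a b c p q r :: "real \<times> real"
  assumes ab: "fst a \<le> fst b" "snd b \<le> snd a" and bc: "fst b \<le> fst c" "snd c \<le> snd b"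
    and sq: "p \<in> unit_square a" "q \<in> unit_square b" "r \<in> unit_square c"
  shows "cross p q r \<le> cross a b c + (fst c - fst a) + (snd a - snd c) + 3"
proof -
  obtain al be ga de ep ze where
    pqr: "p = (fst a + al, snd a + be)" "q = (fst b + ga, snd b + de)" "r = (fst c + ep, snd c + ze)"
    and e: "0 \<le> al" "al \<le> 1" "0 \<le> be" "be \<le> 1" "0 \<le> ga" "ga \<le> 1" "0 \<le> de" "de \<le> 1"
      "0 \<le> ep" "ep \<le> 1" "0 \<le> ze" "ze \<le> 1"
  proof
    show "p = (fst a + (fst p - fst a), snd a + (snd p - snd a))"
      and "q = (fst b + (fst q - fst b), snd b + (snd q - snd b))"
      and "r = (fst c + (fst r - fst c), snd c + (snd r - snd c))" by simp_all
  qed (use sq in \<open>auto simp: unit_square_def\<close>)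
  have expand: "cross p q r = cross a b c
     + (al * (snd b - snd c) + be * (fst c - fst b))
     + (ga * (snd c - snd a) - de * (fst c - fst a))
     + (ep * (snd a - snd b) + ze * (fst b - fst a))
     + (al * de - be * ga) + (ga * ze - de * ep) + (ep * be - ze * al)"
    unfolding pqr cross_def by (simp add: algebra_simps)
  have "al * (snd b - snd c) + be * (fst c - fst b) \<le> (snd b - snd c) + (fst c - fst b)"
    using e bc by (intro unit_weighted_sum_le_sum) auto
  moreover have "ga * (snd c - snd a) \<le> 0" "0 \<le> de * (fst c - fst a)"
    using e ab bc by (simp_all add: mult_nonneg_nonpos)
  moreover have "ep * (snd a - snd b) + ze * (fst b - fst a) \<le> (snd a - snd b) + (fst b - fst a)"
    using e ab by (intro unit_weighted_sum_le_sum) auto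
  moreover have "al * de - be * ga \<le> 1" "ga * ze - de * ep \<le> 1" "ep * be - ze * al \<le> 1"
    using e by (intro unit_cross_le_1; simp)+
  ultimately show ?thesis unfolding expand by linarith
qed

lemma wpt_closed:
  "wpt t n = (3 * (real t * real n - real n * (real n - 1) / 2), - 3 * (real n * (real n - 1) / 2))"
  by (induction n) (auto simp: vstep_def field_simps)

lemma cross_wpt:
  "cross (wpt t a) (wpt t b) (wpt t c) =
     - 9 * real t * (real b - real a) * (real c - real a) * (real c - real b) / 2"
  by (simp add: cross_def wpt_closed algebra_simps divide_simps)

lemma wpt_fst_mono:
  assumes "m \<le> n" "n \<le> t + 1"
  shows "fst (wpt t m) \<le> fst (wpt t n)"
  using assms by (induction n rule: dec_induct) (auto simp: vstep_def)

lemma wpt_snd_antimono: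
  assumes "m \<le> n"
  shows "snd (wpt t n) \<le> snd (wpt t m)"
  using assms by (induction n rule: dec_induct) (auto simp: vstep_def)

lemma wpt_l1_span:
  "(fst (wpt t c) - fst (wpt t a)) + (snd (wpt t a) - snd (wpt t c)) = 3 * real t * (real c - real a)"
  by (simp add: wpt_closed algebra_simps divide_simps)

lemma cubic_dominates_span:
  fixes t A B :: real
  assumes "2 \<le> t" "1 \<le> A" "1 \<le> B"
  shows "- 9 * t * A * (A + B) * B / 2 + 3 * t * (A + B) + 3 < 0"
proof -
  define P where "P = t * (A + B)"
  have "1 \<le> A * B" using assms mult_mono[of 1 A 1 B] by simp
  moreover have "0 \<le> P" using assms by (simp add: P_def)
  ultimately have "P * 1 \<le> P * (A * B)" by (intro mult_left_mono)
  moreover have "4 \<le> P" using assms mult_mono[of 2 t 2 "A + B"] by (simp add: P_def)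
  moreover have "- 9 * t * A * (A + B) * B / 2 + 3 * t * (A + B) + 3 = - 9 / 2 * (P * (A * B)) + 3 * P + 3"
    by (simp add: P_def field_simps)
  ultimately show ?thesis by linarith
qed

lemma right_turn_unit_squares_wpt:
  assumes "2 \<le> t" "i < j" "j < k" "k \<le> t + 1"
    and "p \<in> unit_square (wpt t i)" "q \<in> unit_square (wpt t j)" "r \<in> unit_square (wpt t k)"
  shows "right_turn p q r"
proof -
  have "cross p q r \<le> cross (wpt t i) (wpt t j) (wpt t k)
      + (fst (wpt t k) - fst (wpt t i)) + (snd (wpt t i) - snd (wpt t k)) + 3"
    using assms by (intro cross_unit_squares_le wpt_fst_mono wpt_snd_antimono) auto
  also have "\<dots> = cross (wpt t i) (wpt t j) (wpt t k) + 3 * real t * (real k - real i) + 3"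
    using wpt_l1_span[of t k i] by simp
  also have "\<dots> = - 9 * real t * (real j - real i) * ((real j - real i) + (real k - real j))
                     * (real k - real j) / 2 + 3 * real t * ((real j - real i) + (real k - real j)) + 3"
    by (simp add: cross_wpt)
  also have "\<dots> < 0"
    using assms by (intro cubic_dominates_span) auto
  finally show ?thesis by (simp add: right_turn_iff_cross)
qed

theorem lemma6:
  fixes t i j k :: nat and pi pj pk :: "real \<times> real"
  assumes "t \<ge> 2" and "i < j" and "j < k" and "k \<le> t - 2"
    and "pi \<in> Dsq t i" and "pj \<in> Dsq t j" and "pk \<in> Dsq t k"
  shows "right_turn pi pj pk"
proof -
  have s: "0 < scalefac t" by (simp add: scalefac_def)
  obtain xi yi xj yj xk yk where
    pts: "pi = (scalefac t * xi, scalefac t * yi)" "pj = (scalefac t * xj, scalefac t * yj)"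
      "pk = (scalefac t * xk, scalefac t * yk)"
    and sq: "(xi, yi) \<in> unit_square (wpt t i)" "(xj, yj) \<in> unit_square (wpt t j)"
      "(xk, yk) \<in> unit_square (wpt t k)"
    using assms(5-7) unfolding Dsq_def Csq_eq_unit_square by blast
  have "right_turn (xi, yi) (xj, yj) (xk, yk)"
    using assms(1-4) sq by (intro right_turn_unit_squares_wpt) auto
  then show ?thesis by (simp add: pts right_turn_scale_iff[OF s])
qed

end
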